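(* Let $\mathcal C$ be a Clifford circuit, $\rho$ an input state and $F\in\overline{\mathcal P}_{n(\Delta+1)}$ a fault operator. Define $f\in\mathbb Z_2^m$ by $f_j=[\overrightarrow F_{\ell_j-0.5},S_j]$ and let $E$ be a Hermitian representative of $\overrightarrow F_{\Delta+0.5}$. Then for all $o\in\mathbb Z_2^m$, $\mathbb P^{(F)}_{\mathcal C,\rho}(o)=\mathbb P_{\mathcal C,\rho}(o+f)$ and $\rho^{(F)}_o=E\rho_{o+f}E$.
   Context: A Clifford circuit $\mathcal C$ on $n$ qubits is a finite sequence of operations, each either a unitary Clifford gate or the measurement of a Hermitian $n$-qubit Pauli, each with a level in $\{1,2,\dots\}$; operations of equal level have disjoint supports and levels are nondecreasing. Depth $\Delta$ = maximal level. In circuit order the $j$-th measurement measures $S_j$ at level $\ell_j$ ($j=1,\dots,m$); outcome $o_j=0$ for eigenvalue $+1$, $1$ for $-1$. $\overline{\mathcal P}_N$ is the $N$-qubit Pauli group modulo phases; $[P,Q]\in\mathbb Z_2$ is $0$ iff $P,Q$ commute. $U_\ell$ is the product of the unitary gates of level $\ell$ (identity if none). A fault operator $F\in\overline{\mathcal P}_{n(\Delta+1)}$ acts on qubits $(\ell+0.5,q)$, $0\le\ell\le\Delta$, $1\le q\le n$; $F_{\ell+0.5}\in\overline{\mathcal P}_n$ is its component on level $\ell+0.5$. The cumulant $\overrightarrow F$ is obtained from $F$ by, for $\ell=1,\dots,\Delta$ in order, replacing $\overrightarrow F_{\ell+0.5}$ by $\overrightarrow F_{\ell+0.5}\cdot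 U_\ell\overrightarrow F_{\ell-0.5}U_\ell^{-1}$. Running $\mathcal C$ with faults $F$ on input $\rho$ means: apply $F_{0.5}$ to the input, then for $\ell=1,\dots,\Delta$ apply all level-$\ell$ operations and then the Pauli $F_{\ell+0.5}$. $\mathbb P^{(F)}_{\mathcal C,\rho}(o)$ is the probability of outcome bit-string $o$ and $\rho^{(F)}_o$ the final state conditioned on outcome $o$; $\mathbb P_{\mathcal C,\rho}$ and $\rho_o$ denote these for the fault-free run ($F=I$). *)

theory Defs
  imports "Jordan_Normal_Form.Schur_Decomposition"
begin

datatype pauli1 = PI | PX | PY | PZ

text \<open>An n-qubit Pauli modulo phases is a list of n single-qubit letters.\<close>
type_synonym pauli = "pauli1 list"

definition is_pauli :: "nat \<Rightarrow> pauli \<Rightarrow> bool" where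
  "is_pauli n P \<longleftrightarrow> length P = n"

fun sigma :: "pauli1 \<Rightarrow> bool \<Rightarrow> bool \<Rightarrow> complex" where
  "sigma PI a b = (if a = b then 1 else 0)"
| "sigma PX a b = (if a \<noteq> b then 1 else 0)"
| "sigma PY a b = (if a = b then 0 else if a then \<i> else - \<i>)"
| "sigma PZ a b = (if a = b then (if a then -1 else 1) else 0)"

text \<open>The tensor product of the letters, as a 2^n x 2^n matrix; qubit q
  corresponds to bit q of the basis index.\<close>
definition pauli_mat :: "nat \<Rightarrow> pauli \<Rightarrow> complex mat" where
  "pauli_mat n P = mat (2^n) (2^n)
     (\<lambda>(i, j). \<Prod>q<n. sigma (P ! q) (odd (i div 2^q)) (odd (j div 2^q)))"

text \<open>Product modulo phases.\<close>
fun mult1 :: "pauli1 \<Rightarrow> pauli1 \<Rightarrow> pauli1" where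
  "mult1 PI b = b"
| "mult1 a PI = a"
| "mult1 PX PX = PI" | "mult1 PY PY = PI" | "mult1 PZ PZ = PI"
| "mult1 PX PY = PZ" | "mult1 PY PX = PZ"
| "mult1 PX PZ = PY" | "mult1 PZ PX = PY"
| "mult1 PY PZ = PX" | "mult1 PZ PY = PX"

definition pauli_mult :: "pauli \<Rightarrow> pauli \<Rightarrow> pauli" where
  "pauli_mult P Q = map2 mult1 P Q"

text \<open>Commutator [P,Q] in Z_2 (True = anticommute).\<close>
definition anticomm1 :: "pauli1 \<Rightarrow> pauli1 \<Rightarrow> bool" where
  "anticomm1 a b \<longleftrightarrow> a \<noteq> PI \<and> b \<noteq> PI \<and> a \<noteq> b"

definition pauli_comm :: "pauli \<Rightarrow> pauli \<Rightarrow> bool" where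
  "pauli_comm P Q \<longleftrightarrow> odd (card {q. q < min (length P) (length Q) \<and> anticomm1 (P ! q) (Q ! q)})"

definition single_pauli :: "nat \<Rightarrow> nat \<Rightarrow> pauli1 \<Rightarrow> pauli" where
  "single_pauli n q a = (replicate n PI)[q := a]"

definition mat_trace :: "complex mat \<Rightarrow> complex" where
  "mat_trace A = (\<Sum>i<dim_row A. A $$ (i, i))"

definition unitary :: "nat \<Rightarrow> complex mat \<Rightarrow> bool" where
  "unitary d U \<longleftrightarrow> U \<in> carrier_mat d d \<and> U * mat_adjoint U = 1\<^sub>m d \<and> mat_adjoint U * U = 1\<^sub>m d"

definition hermitian :: "complex mat \<Rightarrow> bool" where
  "hermitian A \<longleftrightarrow> mat_adjoint A = A"

definition density_mat :: "nat \<Rightarrow> complex mat \<Rightarrow> bool" where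
  "density_mat n \<rho> \<longleftrightarrow> \<rho> \<in> carrier_mat (2^n) (2^n) \<and> hermitian \<rho> \<and>
     (\<forall>v \<in> carrier_vec (2^n). Re (conjugate v \<bullet> (\<rho> *\<^sub>v v)) \<ge> 0) \<and> mat_trace \<rho> = 1"

definition clifford_gate :: "nat \<Rightarrow> complex mat \<Rightarrow> bool" where
  "clifford_gate n U \<longleftrightarrow> unitary (2^n) U \<and>
     (\<forall>P. is_pauli n P \<longrightarrow> (\<exists>Q c. is_pauli n Q \<and>
        U * pauli_mat n P * mat_adjoint U = c \<cdot>\<^sub>m pauli_mat n Q))"

definition clifford_conj :: "nat \<Rightarrow> complex mat \<Rightarrow> pauli \<Rightarrow> pauli" where
  "clifford_conj n U P = (SOME Q. is_pauli n Q \<and>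
     (\<exists>c. U * pauli_mat n P * mat_adjoint U = c \<cdot>\<^sub>m pauli_mat n Q))"

text \<open>Support: qubits on which an operator acts non-trivially.  A unitary acts
  trivially on qubit q iff it commutes with X_q and Z_q.\<close>
definition gate_support :: "nat \<Rightarrow> complex mat \<Rightarrow> nat set" where
  "gate_support n U = {q. q < n \<and>
     (U * pauli_mat n (single_pauli n q PX) \<noteq> pauli_mat n (single_pauli n q PX) * U \<or>
      U * pauli_mat n (single_pauli n q PZ) \<noteq> pauli_mat n (single_pauli n q PZ) * U)}"

definition pauli_support :: "pauli \<Rightarrow> nat set" where
  "pauli_support P = {q. q < length P \<and> P ! q \<noteq> PI}"

text \<open>A measurement of the Hermitian Pauli (-1)^s P; the Boolean is the sign bit.\<close>
datatype operation = Gate "complex mat" | Meas bool pauli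

type_synonym circuit = "(nat \<times> operation) list"  \<comment> \<open>(level, operation)\<close>

definition meas_mat :: "nat \<Rightarrow> bool \<Rightarrow> pauli \<Rightarrow> complex mat" where
  "meas_mat n s P = (if s then -1 else 1) \<cdot>\<^sub>m pauli_mat n P"

fun op_support :: "nat \<Rightarrow> operation \<Rightarrow> nat set" where
  "op_support n (Gate U) = gate_support n U"
| "op_support n (Meas s P) = pauli_support P"

fun op_ok :: "nat \<Rightarrow> operation \<Rightarrow> bool" where
  "op_ok n (Gate U) = clifford_gate n U"
| "op_ok n (Meas s P) = is_pauli n P"

definition clifford_circuit :: "nat \<Rightarrow> circuit \<Rightarrow> bool" where
  "clifford_circuit n C \<longleftrightarrow>
     (\<forall>(l, op) \<in> set C. l \<ge> 1 \<and> op_ok n op) \<and>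
     sorted (map fst C) \<and>
     (\<forall>i j. i < length C \<and> j < length C \<and> i \<noteq> j \<and> fst (C ! i) = fst (C ! j) \<longrightarrow>
        op_support n (snd (C ! i)) \<inter> op_support n (snd (C ! j)) = {})"

definition depth :: "circuit \<Rightarrow> nat" where
  "depth C = Max (insert 0 (fst ` set C))"

definition measurements :: "circuit \<Rightarrow> (nat \<times> bool \<times> pauli) list" where
  "measurements C = concat (map (\<lambda>(l, op). case op of Meas s P \<Rightarrow> [(l, s, P)] | Gate U \<Rightarrow> []) C)"

definition num_meas :: "circuit \<Rightarrow> nat" where
  "num_meas C = length (measurements C)"

text \<open>U_l: product of the level-l gates (later gates applied after earlier ones).\<close>
definition level_unitary :: "nat \<Rightarrow> circuit \<Rightarrow> nat \<Rightarrow> complex mat" where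
  "level_unitary n C l = foldl (\<lambda>A (k, op). case op of Gate V \<Rightarrow> if k = l then V * A else A
                                                  | Meas s P \<Rightarrow> A) (1\<^sub>m (2^n)) C"

text \<open>A fault operator: F l is its component at level l + 0.5, l = 0..depth.\<close>
type_synonym fault = "nat \<Rightarrow> pauli"

definition is_fault :: "nat \<Rightarrow> circuit \<Rightarrow> fault \<Rightarrow> bool" where
  "is_fault n C F \<longleftrightarrow> (\<forall>l \<le> depth C. is_pauli n (F l))"

text \<open>Cumulant: cumulant n C F l is the component at level l + 0.5.\<close>
fun cumulant :: "nat \<Rightarrow> circuit \<Rightarrow> fault \<Rightarrow> nat \<Rightarrow> pauli" where
  "cumulant n C F 0 = F 0"
| "cumulant n C F (Suc l) =
     pauli_mult (F (Suc l)) (clifford_conj n (level_unitary n C (Suc l)) (cumulant n C F l))"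

datatype step = UStep "complex mat" | MStep "complex mat"

definition proj :: "nat \<Rightarrow> complex mat \<Rightarrow> bool \<Rightarrow> complex mat" where
  "proj n A b = (1 / 2 :: complex) \<cdot>\<^sub>m (1\<^sub>m (2^n) + (if b then -1 else 1) \<cdot>\<^sub>m A)"

text \<open>Unnormalised post-measurement state; outcomes consumed in order
  (False = outcome 0 = eigenvalue +1).\<close>
fun exec :: "nat \<Rightarrow> step list \<Rightarrow> bool list \<Rightarrow> complex mat \<Rightarrow> complex mat" where
  "exec n [] os \<rho> = \<rho>"
| "exec n (UStep V # ss) os \<rho> = exec n ss os (V * \<rho> * mat_adjoint V)"
| "exec n (MStep A # ss) (b # os) \<rho> = exec n ss os (proj n A b * \<rho> * proj n A b)"
| "exec n (MStep A # ss) [] \<rho> = 0\<^sub>m (2^n) (2^n)"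

definition op_step :: "nat \<Rightarrow> operation \<Rightarrow> step" where
  "op_step n op = (case op of Gate U \<Rightarrow> UStep U | Meas s P \<Rightarrow> MStep (meas_mat n s P))"

definition faulty_steps :: "nat \<Rightarrow> circuit \<Rightarrow> fault \<Rightarrow> step list" where
  "faulty_steps n C F = UStep (pauli_mat n (F 0)) #
     concat (map (\<lambda>l. map (op_step n \<circ> snd) (filter (\<lambda>x. fst x = l) C) @ [UStep (pauli_mat n (F l))])
                 [1..<Suc (depth C)])"

definition no_fault :: "nat \<Rightarrow> fault" where
  "no_fault n = (\<lambda>l. replicate n PI)"

definition prob_F :: "nat \<Rightarrow> circuit \<Rightarrow> fault \<Rightarrow> complex mat \<Rightarrow> bool list \<Rightarrow> real" where
  "prob_F n C F \<rho> os = Re (mat_trace (exec n (faulty_steps n C F) os \<rho>))"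

definition state_F :: "nat \<Rightarrow> circuit \<Rightarrow> fault \<Rightarrow> complex mat \<Rightarrow> bool list \<Rightarrow> complex mat" where
  "state_F n C F \<rho> os = complex_of_real (1 / prob_F n C F \<rho> os) \<cdot>\<^sub>m exec n (faulty_steps n C F) os \<rho>"

definition prob :: "nat \<Rightarrow> circuit \<Rightarrow> complex mat \<Rightarrow> bool list \<Rightarrow> real" where
  "prob n C \<rho> os = prob_F n C (no_fault n) \<rho> os"

definition state :: "nat \<Rightarrow> circuit \<Rightarrow> complex mat \<Rightarrow> bool list \<Rightarrow> complex mat" where
  "state n C \<rho> os = state_F n C (no_fault n) \<rho> os"

text \<open>Syndrome-flip vector f: f_j = [cumulant at level l_j - 0.5, S_j].\<close>
definition flip_vector :: "nat \<Rightarrow> circuit \<Rightarrow> fault \<Rightarrow> bool list" where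
  "flip_vector n C F = map (\<lambda>(l, s, P). pauli_comm (cumulant n C F (l - 1)) P) (measurements C)"

definition xor_list :: "bool list \<Rightarrow> bool list \<Rightarrow> bool list" where
  "xor_list a b = map2 (\<noteq>) a b"

end

(*
  Push the faults through the circuit one level at a time.  By induction on the level L,
  the faulty run up to level L equals the fault-free run with the measurement outcomes
  flipped by f, conjugated by the Pauli matrix of the cumulant at level L + 0.5.
  A Pauli W is pushed through a level as follows: a gate V replaces it by V W V^-1, and a
  projector (1 + (-1)^b S)/2 passes W with b replaced by b + [W, S].  Gates and measurements
  of one level act on disjoint qubits, so the gates of a level commute with the measured
  Paulis, and [W, S] may be computed with W the cumulant before the level.  After the level,
  W is U_l P U_l^-1 = c Q with Q = clifford_conj of P, and the new fault F_(l+0.5) multiplies it;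
  conjugations ignore unit phases.  Conjugating by a Pauli preserves the trace, which gives the
  statement about probabilities.
*)
theory Submission
  imports Defs
begin

section \<open>Bit-indexed tensor products and adjoints\<close>

lemma odd_div_pow2_add_high:
  fixes k q n :: nat
  assumes "q < n"
  shows "odd ((2^n + k) div 2^q) = odd (k div 2^q)"
proof -
  have "(2::nat)^n = 2^q * 2^(n-q)" using assms by (simp add: power_add[symmetric])
  then have "(2^n + k) div 2^q = 2^(n-q) + k div 2^q" by simp
  then show ?thesis using assms by simp
qed

lemma sum_pow2_prod_bits:
  fixes g :: "nat \<Rightarrow> bool \<Rightarrow> 'a::comm_semiring_1"
  shows "(\<Sum>k<(2::nat)^n. \<Prod>q<n. g q (odd (k div 2^q))) = (\<Prod>q<n. g q False + g q True)"
proof (induction n)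
  case 0
  then show ?case by simp
next
  case (Suc n)
  let ?high = "(\<lambda>k::nat. 2^n + k) ` {..<2^n}"
  have split: "{..<(2::nat)^Suc n} = {..<2^n} \<union> ?high"
  proof -
    have "x \<in> ?high" if "2^n \<le> x" "x < 2^Suc n" for x :: nat
      using that by (intro image_eqI[of _ _ "x - 2^n"]) auto
    then show ?thesis by (auto simp: not_less) (meson not_less)
  qed
  have low: "(\<Sum>k<(2::nat)^n. \<Prod>q<Suc n. g q (odd (k div 2^q))) =
     (\<Sum>k<(2::nat)^n. (\<Prod>q<n. g q (odd (k div 2^q))) * g n False)"
    by (rule sum.cong) auto
  have high: "(\<Sum>k\<in>?high. \<Prod>q<Suc n. g q (odd (k div 2^q)))
      = (\<Sum>k<(2::nat)^n. (\<Prod>q<n. g q (odd (k div 2^q))) * g n True)"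
  proof (subst sum.reindex, simp add: inj_on_def, rule sum.cong)
    fix k assume k: "k \<in> {..<(2::nat)^n}"
    have "(\<Prod>q<n. g q (odd ((2^n + k) div 2^q))) = (\<Prod>q<n. g q (odd (k div 2^q)))"
      by (rule prod.cong) (auto simp: odd_div_pow2_add_high)
    moreover have "(2^n + k) div 2^n = 1" using k by auto
    ultimately show "((\<lambda>k. \<Prod>q<Suc n. g q (odd (k div 2^q))) \<circ> (+) (2^n)) k
        = (\<Prod>q<n. g q (odd (k div 2^q))) * g n True"
      by simp
  qed simp
  have "(\<Sum>k<(2::nat)^Suc n. \<Prod>q<Suc n. g q (odd (k div 2^q)))
      = (\<Sum>k<(2::nat)^n. \<Prod>q<Suc n. g q (odd (k div 2^q))) +
        (\<Sum>k\<in>?high. \<Prod>q<Suc n. g q (odd (k div 2^q)))"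
    unfolding split by (rule sum.union_disjoint) auto
  also have "\<dots> = (\<Sum>k<(2::nat)^n. (\<Prod>q<n. g q (odd (k div 2^q))) * g n False) +
      (\<Sum>k<(2::nat)^n. (\<Prod>q<n. g q (odd (k div 2^q))) * g n True)"
    by (simp only: low high)
  finally show ?case
    by (simp add: sum_distrib_right[symmetric] Suc.IH distrib_left)
qed

lemma eq_if_bits_eq:
  fixes i j :: nat
  assumes "i < 2^n" "j < 2^n" "\<forall>q<n. odd (i div 2^q) = odd (j div 2^q)"
  shows "i = j"
  using assms
proof (induction n arbitrary: i j)
  case 0
  then show ?case by simp
next
  case (Suc n)
  have "i div 2 = j div 2"
  proof (rule Suc.IH)
    show "i div 2 < 2^n" "j div 2 < 2^n" using Suc.prems by auto
    show "\<forall>q<n. odd (i div 2 div 2 ^ q) = odd (j div 2 div 2 ^ q)"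
      using Suc.prems(3) by (auto simp: div_mult2_eq[symmetric])
  qed
  moreover have "odd i = odd j" using Suc.prems(3)[rule_format, of 0] by simp
  ultimately show ?case by (metis div_mult_mod_eq odd_iff_mod_2_eq_one parity_cases)
qed

definition bit_tensor :: "nat \<Rightarrow> (nat \<Rightarrow> bool \<Rightarrow> bool \<Rightarrow> complex) \<Rightarrow> complex mat" where
  "bit_tensor n a = mat (2^n) (2^n) (\<lambda>(i, j). \<Prod>q<n. a q (odd (i div 2^q)) (odd (j div 2^q)))"

lemma bit_tensor_carrier [simp]: "bit_tensor n a \<in> carrier_mat (2^n) (2^n)"
  and dim_bit_tensor [simp]: "dim_row (bit_tensor n a) = 2^n" "dim_col (bit_tensor n a) = 2^n"
  by (simp_all add: bit_tensor_def)

lemma index_bit_tensor [simp]: "i < 2^n \<Longrightarrow> j < 2^n \<Longrightarrow>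
  bit_tensor n a $$ (i, j) = (\<Prod>q<n. a q (odd (i div 2^q)) (odd (j div 2^q)))"
  by (simp add: bit_tensor_def)

lemma bit_tensor_mult:
  "bit_tensor n a * bit_tensor n b =
   bit_tensor n (\<lambda>q x y. a q x False * b q False y + a q x True * b q True y)"
proof (rule eq_matI)
  fix i j assume "i < dim_row (bit_tensor n (\<lambda>q x y. a q x False * b q False y + a q x True * b q True y))"
    and "j < dim_col (bit_tensor n (\<lambda>q x y. a q x False * b q False y + a q x True * b q True y))"
  then have i: "i < 2^n" and j: "j < 2^n" by auto
  let ?x = "\<lambda>q. odd (i div 2^q)" and ?y = "\<lambda>q. odd (j div 2^q)"
  have "(bit_tensor n a * bit_tensor n b) $$ (i, j)
      = (\<Sum>k<(2::nat)^n. bit_tensor n a $$ (i, k) * bit_tensor n b $$ (k, j))"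
    using i j by (simp add: scalar_prod_def lessThan_atLeast0)
  also have "\<dots> = (\<Sum>k<(2::nat)^n. \<Prod>q<n. a q (?x q) (odd (k div 2^q)) * b q (odd (k div 2^q)) (?y q))"
    using i j by (intro sum.cong) (auto simp: prod.distrib)
  also have "\<dots> = (\<Prod>q<n. a q (?x q) False * b q False (?y q) + a q (?x q) True * b q True (?y q))"
    by (rule sum_pow2_prod_bits)
  finally show "(bit_tensor n a * bit_tensor n b) $$ (i, j) =
      bit_tensor n (\<lambda>q x y. a q x False * b q False y + a q x True * b q True y) $$ (i, j)"
    using i j by simp
qed auto

lemma bit_tensor_delta: "bit_tensor n (\<lambda>q x y. if x = y then 1 else 0) = 1\<^sub>m (2^n)"
proof (rule eq_matI)
  fix i j assume "i < dim_row (1\<^sub>m (2^n) :: complex mat)" "j < dim_col (1\<^sub>m (2^n) :: complex mat)"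
  then have i: "i < 2^n" and j: "j < 2^n" by auto
  show "bit_tensor n (\<lambda>q x y. if x = y then 1 else 0) $$ (i, j) = 1\<^sub>m (2 ^ n) $$ (i, j)"
  proof (cases "i = j")
    case False
    then obtain q where "q < n" "odd (i div 2^q) \<noteq> odd (j div 2^q)"
      using eq_if_bits_eq[OF i j] by blast
    then have "(\<Prod>q<n. (if odd (i div 2^q) = odd (j div 2^q) then 1 else 0 :: complex)) = 0"
      by (intro prod_zero) auto
    then show ?thesis using i j False by simp
  qed (use i in simp)
qed auto

lemma bit_tensor_scale: "bit_tensor n (\<lambda>q x y. c q * b q x y) = (\<Prod>q<n. c q) \<cdot>\<^sub>m bit_tensor n b"
  by (rule eq_matI) (auto simp: prod.distrib)

lemma bit_tensor_cong: "(\<And>q x y. q < n \<Longrightarrow> a q x y = b q x y) \<Longrightarrow> bit_tensor n a = bit_tensor n b"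
  by (rule eq_matI) (auto intro!: prod.cong)

lemma mat_adjoint_eq: "mat_adjoint (A :: complex mat) = mat (dim_col A) (dim_row A) (\<lambda>(i,j). cnj (A $$ (j,i)))"
  by (rule eq_matI) (auto simp: mat_adjoint_def mat_of_rows_index)

lemma mat_adjoint_carrier [simp]: "A \<in> carrier_mat a b \<Longrightarrow> mat_adjoint (A :: complex mat) \<in> carrier_mat b a"
  and dim_mat_adjoint [simp]: "dim_row (mat_adjoint (A :: complex mat)) = dim_col A"
    "dim_col (mat_adjoint (A :: complex mat)) = dim_row A"
  by (auto simp: mat_adjoint_eq)

lemma index_mat_adjoint [simp]:
  "i < dim_col A \<Longrightarrow> j < dim_row A \<Longrightarrow> mat_adjoint (A :: complex mat) $$ (i,j) = cnj (A $$ (j,i))"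
  by (simp add: mat_adjoint_eq)

lemma mat_adjoint_mult:
  assumes "dim_col A = dim_row B"
  shows "mat_adjoint ((A :: complex mat) * B) = mat_adjoint B * mat_adjoint A"
  by (rule eq_matI) (use assms in \<open>auto simp: scalar_prod_def mult.commute intro!: sum.cong\<close>)

lemma mat_adjoint_smult: "mat_adjoint (k \<cdot>\<^sub>m (A :: complex mat)) = cnj k \<cdot>\<^sub>m mat_adjoint A"
  by (rule eq_matI) auto

lemma mat_adjoint_bit_tensor: "mat_adjoint (bit_tensor n a) = bit_tensor n (\<lambda>q x y. cnj (a q y x))"
  by (rule eq_matI) (auto simp: cnj_prod)

lemma assoc_mult_mat_dims [simp]:
  "dim_col A = dim_row B \<Longrightarrow> dim_col B = dim_row C \<Longrightarrow> (A * B) * (C :: complex mat) = A * (B * C)"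
  by (rule assoc_mult_mat[of A "dim_row A" "dim_col A" B "dim_col B" C "dim_col C"]) auto

lemma mult_smult_mat_dims [simp]:
  "dim_col A = dim_row B \<Longrightarrow> (A :: complex mat) * (k \<cdot>\<^sub>m B) = k \<cdot>\<^sub>m (A * B)"
  by (rule mult_smult_distrib[of A "dim_row A" "dim_col A" B "dim_col B"]) auto

lemma smult_mult_mat_dims [simp]:
  "dim_col A = dim_row B \<Longrightarrow> (k \<cdot>\<^sub>m A) * (B :: complex mat) = k \<cdot>\<^sub>m (A * B)"
  by (rule mult_smult_assoc_mat[of A "dim_row A" "dim_col A" B "dim_col B"]) auto

lemma smult_smult_mat [simp]: "a \<cdot>\<^sub>m (b \<cdot>\<^sub>m (A :: complex mat)) = (a * b) \<cdot>\<^sub>m A"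
  and one_smult_mat [simp]: "1 \<cdot>\<^sub>m (A :: complex mat) = A"
  by (rule eq_matI; auto)+

lemma mat_adjoint_adjoint [simp]: "mat_adjoint (mat_adjoint (A :: complex mat)) = A"
  and mat_adjoint_one [simp]: "mat_adjoint (1\<^sub>m d :: complex mat) = 1\<^sub>m d"
  by (rule eq_matI; auto)+

lemma mat_adjoint_conj:
  "dim_col V = dim_row W \<Longrightarrow> dim_col W = dim_col V \<Longrightarrow>
   mat_adjoint (V * W * mat_adjoint V) = V * mat_adjoint W * mat_adjoint (V :: complex mat)"
  by (simp add: mat_adjoint_mult)

lemma hermitian_conj:
  "hermitian W \<Longrightarrow> W \<in> carrier_mat d d \<Longrightarrow> V \<in> carrier_mat d d \<Longrightarrow> hermitian (V * W * mat_adjoint V)"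
  unfolding hermitian_def by (subst mat_adjoint_conj) auto

section \<open>Pauli matrices\<close>

fun pauli1_phase :: "pauli1 \<Rightarrow> pauli1 \<Rightarrow> complex" where
  "pauli1_phase PX PY = \<i>" | "pauli1_phase PY PX = - \<i>"
| "pauli1_phase PY PZ = \<i>" | "pauli1_phase PZ PY = - \<i>"
| "pauli1_phase PZ PX = \<i>" | "pauli1_phase PX PZ = - \<i>"
| "pauli1_phase _ _ = 1"

lemma pauli1_phase_PI [simp]: "pauli1_phase PI b = 1" "pauli1_phase a PI = 1"
  by (cases b; simp) (cases a; simp)

lemma sigma_mult:
  "sigma a x False * sigma b False y + sigma a x True * sigma b True y
   = pauli1_phase a b * sigma (mult1 a b) x y"
  by (cases a; cases b; cases x; cases y; simp)

lemma sigma_mult_commute: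
  "sigma a x False * sigma b False y + sigma a x True * sigma b True y
   = (if anticomm1 a b then -1 else 1) * (sigma b x False * sigma a False y + sigma b x True * sigma a True y)"
  by (cases a; cases b; cases x; cases y; simp add: anticomm1_def)

lemma sigma_square:
  "sigma a x False * sigma a False y + sigma a x True * sigma a True y = (if x = y then 1 else 0)"
  by (cases a; cases x; cases y; simp)

lemma cnj_sigma: "cnj (sigma a y x) = sigma a x y"
  by (cases a; cases x; cases y; simp)

lemma pauli_mat_eq_bit_tensor: "pauli_mat n P = bit_tensor n (\<lambda>q. sigma (P ! q))"
  by (simp add: pauli_mat_def bit_tensor_def)

lemma pauli_mat_carrier [simp]: "pauli_mat n P \<in> carrier_mat (2^n) (2^n)"
  and dim_pauli_mat [simp]: "dim_row (pauli_mat n P) = 2^n" "dim_col (pauli_mat n P) = 2^n"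
  by (simp_all add: pauli_mat_eq_bit_tensor)

lemma pauli_mat_mult:
  assumes "length P = n" "length Q = n"
  shows "pauli_mat n P * pauli_mat n Q =
    (\<Prod>q<n. pauli1_phase (P!q) (Q!q)) \<cdot>\<^sub>m pauli_mat n (pauli_mult P Q)"
proof -
  have "pauli_mat n P * pauli_mat n Q =
      bit_tensor n (\<lambda>q x y. pauli1_phase (P!q) (Q!q) * sigma (pauli_mult P Q ! q) x y)"
    unfolding pauli_mat_eq_bit_tensor bit_tensor_mult
    by (rule bit_tensor_cong) (use assms in \<open>simp add: sigma_mult pauli_mult_def\<close>)
  then show ?thesis by (simp add: bit_tensor_scale pauli_mat_eq_bit_tensor)
qed

lemma prod_sign_eq_card:
  "(\<Prod>q<(n::nat). (if A q then -1 else 1 :: complex)) = (if odd (card {q. q < n \<and> A q}) then -1 else 1)"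
proof -
  have "(\<Prod>q<n. (if A q then -1 else 1 :: complex)) = (\<Prod>q\<in>{q. q < n \<and> A q}. -1)"
    by (rule prod.mono_neutral_cong_right) auto
  then show ?thesis by simp
qed

lemma pauli_mat_commute:
  assumes "length P = n" "length Q = n"
  shows "pauli_mat n P * pauli_mat n Q =
    (if pauli_comm P Q then -1 else 1) \<cdot>\<^sub>m (pauli_mat n Q * pauli_mat n P)"
proof -
  have "pauli_mat n P * pauli_mat n Q = bit_tensor n (\<lambda>q x y. (if anticomm1 (P!q) (Q!q) then -1 else 1) *
      (sigma (Q!q) x False * sigma (P!q) False y + sigma (Q!q) x True * sigma (P!q) True y))"
    unfolding pauli_mat_eq_bit_tensor bit_tensor_mult by (rule bit_tensor_cong) (rule sigma_mult_commute)
  also have "\<dots> = (\<Prod>q<n. (if anticomm1 (P!q) (Q!q) then -1 else 1)) \<cdot>\<^sub>m (pauli_mat n Q * pauli_mat n P)"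
    unfolding bit_tensor_scale pauli_mat_eq_bit_tensor bit_tensor_mult ..
  finally show ?thesis using assms by (simp add: prod_sign_eq_card pauli_comm_def)
qed

lemma pauli_mat_square: "pauli_mat n P * pauli_mat n P = 1\<^sub>m (2^n)"
  unfolding pauli_mat_eq_bit_tensor bit_tensor_mult sigma_square bit_tensor_delta ..

lemma mat_adjoint_pauli_mat [simp]: "mat_adjoint (pauli_mat n P) = pauli_mat n P"
  unfolding pauli_mat_eq_bit_tensor mat_adjoint_bit_tensor cnj_sigma ..

lemma pauli_mat_identity: "pauli_mat n (replicate n PI) = 1\<^sub>m (2^n)"
proof -
  have "pauli_mat n (replicate n PI) = bit_tensor n (\<lambda>q x y. if x = y then 1 else 0)"
    unfolding pauli_mat_eq_bit_tensor by (rule bit_tensor_cong) simp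
  then show ?thesis by (simp add: bit_tensor_delta)
qed

lemma pauli_comm_sym: "pauli_comm P Q = pauli_comm Q P"
proof -
  have "anticomm1 a b = anticomm1 b a" for a b by (auto simp: anticomm1_def)
  then show ?thesis unfolding pauli_comm_def by (simp add: min.commute)
qed

lemma unitary_pauli_mat: "unitary (2^n) (pauli_mat n P)"
  by (simp add: unitary_def pauli_mat_square)

lemma unitary_cancel:
  assumes "unitary d V" "dim_row Y = d"
  shows "mat_adjoint V * (V * Y) = Y" "V * (mat_adjoint V * Y) = Y"
proof -
  have "V \<in> carrier_mat d d" using assms(1) by (simp add: unitary_def)
  then have "mat_adjoint V * (V * Y) = (mat_adjoint V * V) * Y" "V * (mat_adjoint V * Y) = (V * mat_adjoint V) * Y"
    using assms(2) by auto
  then show "mat_adjoint V * (V * Y) = Y" "V * (mat_adjoint V * Y) = Y"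
    using assms by (simp_all add: unitary_def)
qed

lemma unitary_mult:
  assumes "unitary d U" "unitary d V"
  shows "unitary d (U * V)"
proof -
  have "U \<in> carrier_mat d d" "V \<in> carrier_mat d d" using assms by (auto simp: unitary_def)
  then show ?thesis
    using assms by (simp add: unitary_def mat_adjoint_mult unitary_cancel)
qed

lemma unitary_adjoint: "unitary d U \<Longrightarrow> unitary d (mat_adjoint U)"
  by (auto simp: unitary_def)

lemma unit_modulus_if_unitary_smult_pauli:
  assumes "unitary (2^n) (k \<cdot>\<^sub>m pauli_mat n P)"
  shows "k * cnj k = 1"
proof -
  have "(k \<cdot>\<^sub>m pauli_mat n P) * mat_adjoint (k \<cdot>\<^sub>m pauli_mat n P) = (k * cnj k) \<cdot>\<^sub>m 1\<^sub>m (2^n)"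
    by (simp add: mat_adjoint_smult pauli_mat_square mult.commute)
  then have "((k * cnj k) \<cdot>\<^sub>m 1\<^sub>m (2^n)) $$ (0,0) = (1\<^sub>m (2^n) :: complex mat) $$ (0,0)"
    using assms by (simp add: unitary_def)
  then show ?thesis by simp
qed

lemma conj_unit_smult_pauli:
  assumes "k * cnj k = 1" "dim_row Z = 2^n" "dim_col Z = 2^n"
  shows "(k \<cdot>\<^sub>m pauli_mat n P) * Z * mat_adjoint (k \<cdot>\<^sub>m pauli_mat n P) = pauli_mat n P * Z * pauli_mat n P"
  using assms by (simp add: mat_adjoint_smult mult.commute)

section \<open>Clifford gates and supports\<close>

lemma clifford_gate_one: "clifford_gate n (1\<^sub>m (2^n))"
  unfolding clifford_gate_def unitary_def by (force simp: is_pauli_def)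

lemma clifford_gate_mult:
  assumes "clifford_gate n U" "clifford_gate n V"
  shows "clifford_gate n (U * V)"
proof -
  have U: "U \<in> carrier_mat (2^n) (2^n)" and V: "V \<in> carrier_mat (2^n) (2^n)"
    using assms by (auto simp: clifford_gate_def unitary_def)
  have "\<exists>R e. is_pauli n R \<and> U * V * pauli_mat n P * mat_adjoint (U * V) = e \<cdot>\<^sub>m pauli_mat n R"
    if P: "is_pauli n P" for P
  proof -
    obtain Q c where Q: "is_pauli n Q" and c: "V * pauli_mat n P * mat_adjoint V = c \<cdot>\<^sub>m pauli_mat n Q"
      using assms(2) P unfolding clifford_gate_def by blast
    obtain R d where R: "is_pauli n R" and d: "U * pauli_mat n Q * mat_adjoint U = d \<cdot>\<^sub>m pauli_mat n R"
      using assms(1) Q unfolding clifford_gate_def by blast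
    have "U * V * pauli_mat n P * mat_adjoint (U * V) = U * (V * pauli_mat n P * mat_adjoint V) * mat_adjoint U"
      using U V by (simp add: mat_adjoint_mult)
    also have "\<dots> = c \<cdot>\<^sub>m (U * pauli_mat n Q * mat_adjoint U)"
      using U by (simp add: c)
    also have "\<dots> = (c * d) \<cdot>\<^sub>m pauli_mat n R"
      unfolding d by simp
    finally show ?thesis using R by blast
  qed
  then show ?thesis using assms by (simp add: clifford_gate_def unitary_mult)
qed

lemma clifford_conjD:
  assumes "clifford_gate n U" "is_pauli n P"
  shows "is_pauli n (clifford_conj n U P)"
    "\<exists>c. U * pauli_mat n P * mat_adjoint U = c \<cdot>\<^sub>m pauli_mat n (clifford_conj n U P)"
proof -
  have "\<exists>Q. is_pauli n Q \<and> (\<exists>c. U * pauli_mat n P * mat_adjoint U = c \<cdot>\<^sub>m pauli_mat n Q)"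
    using assms unfolding clifford_gate_def by blast
  then have "is_pauli n (clifford_conj n U P) \<and>
      (\<exists>c. U * pauli_mat n P * mat_adjoint U = c \<cdot>\<^sub>m pauli_mat n (clifford_conj n U P))"
    unfolding clifford_conj_def by (rule someI_ex)
  then show "is_pauli n (clifford_conj n U P)"
    "\<exists>c. U * pauli_mat n P * mat_adjoint U = c \<cdot>\<^sub>m pauli_mat n (clifford_conj n U P)"
    by auto
qed

lemma commute_mult:
  assumes "V \<in> carrier_mat d d" "A \<in> carrier_mat d d" "B \<in> carrier_mat d d"
    and "V * A = A * V" "V * B = B * V"
  shows "V * (A * B) = (A * B) * V"
proof -
  have "V * (A * B) = (V * A) * B" using assms(1-3) by simp
  also have "\<dots> = A * (V * B)" using assms by simp
  also have "\<dots> = (A * B) * V" using assms by simp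
  finally show ?thesis .
qed

lemma length_single_pauli [simp]: "length (single_pauli n q a) = n"
  by (simp add: single_pauli_def)

lemma nth_single_pauli: "q' < n \<Longrightarrow> single_pauli n q a ! q' = (if q' = q then a else PI)"
  by (simp add: single_pauli_def nth_list_update)

lemma pauli_mat_single_PI: "q < n \<Longrightarrow> pauli_mat n (single_pauli n q PI) = 1\<^sub>m (2^n)"
proof -
  assume "q < n"
  then have "single_pauli n q PI = replicate n PI"
    by (intro nth_equalityI) (auto simp: nth_single_pauli)
  then show ?thesis by (simp add: pauli_mat_identity)
qed

lemma mult1_PI_right [simp]: "mult1 a PI = a"
  by (cases a) auto

lemma pauli_mat_mult_disjoint:
  assumes "length P = n" "length Q = n" "\<forall>q<n. P ! q = PI \<or> Q ! q = PI"
  shows "pauli_mat n P * pauli_mat n Q = pauli_mat n (pauli_mult P Q)"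
proof -
  have "(\<Prod>q<n. pauli1_phase (P!q) (Q!q)) = 1" using assms(3) by (intro prod.neutral) auto
  then show ?thesis using pauli_mat_mult[OF assms(1,2)] by simp
qed

lemma pauli_mat_single_Y:
  assumes "k < n"
  shows "pauli_mat n (single_pauli n k PY) =
    \<i> \<cdot>\<^sub>m (pauli_mat n (single_pauli n k PX) * pauli_mat n (single_pauli n k PZ))"
proof -
  have "(\<Prod>q<n. pauli1_phase (single_pauli n k PX ! q) (single_pauli n k PZ ! q)) =
        (\<Prod>q\<in>{k}. pauli1_phase (single_pauli n k PX ! q) (single_pauli n k PZ ! q))"
    using assms by (intro prod.mono_neutral_right) (auto simp: nth_single_pauli)
  then have phase: "(\<Prod>q<n. pauli1_phase (single_pauli n k PX ! q) (single_pauli n k PZ ! q)) = - \<i>"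
    using assms by (simp add: nth_single_pauli)
  have "pauli_mult (single_pauli n k PX) (single_pauli n k PZ) = single_pauli n k PY"
    by (rule nth_equalityI) (auto simp: pauli_mult_def nth_single_pauli)
  then show ?thesis
    using pauli_mat_mult[of "single_pauli n k PX" n "single_pauli n k PZ"] by (simp add: phase)
qed

lemma commute_single_pauli_outside_support:
  assumes V: "V \<in> carrier_mat (2^n) (2^n)" and k: "k < n" and "k \<notin> gate_support n V"
  shows "V * pauli_mat n (single_pauli n k a) = pauli_mat n (single_pauli n k a) * V"
proof -
  have X: "V * pauli_mat n (single_pauli n k PX) = pauli_mat n (single_pauli n k PX) * V"
   and Z: "V * pauli_mat n (single_pauli n k PZ) = pauli_mat n (single_pauli n k PZ) * V"
    using assms by (auto simp: gate_support_def)
  show ?thesis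
  proof (cases a)
    case PY
    have "V * (pauli_mat n (single_pauli n k PX) * pauli_mat n (single_pauli n k PZ)) =
          (pauli_mat n (single_pauli n k PX) * pauli_mat n (single_pauli n k PZ)) * V"
      by (rule commute_mult[OF V _ _ X Z]) auto
    then show ?thesis using PY V k by (simp add: pauli_mat_single_Y)
  qed (use X Z V k in \<open>simp_all add: pauli_mat_single_PI\<close>)
qed

lemma commute_pauli_if_disjoint_support:
  assumes V: "V \<in> carrier_mat (2^n) (2^n)" and S: "is_pauli n S"
    and disj: "pauli_support S \<inter> gate_support n V = {}"
  shows "V * pauli_mat n S = pauli_mat n S * V"
proof -
  define T where "T k = map (\<lambda>q. if q < k then S ! q else PI) [0..<n]" for k
  have "V * pauli_mat n (T k) = pauli_mat n (T k) * V" if "k \<le> n" for k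
    using that
  proof (induction k)
    case 0
    have "T 0 = replicate n PI" by (simp add: T_def map_replicate_const)
    then show ?case using V by (simp add: pauli_mat_identity)
  next
    case (Suc k)
    have k: "k < n" using Suc.prems by simp
    have "T (Suc k) = pauli_mult (T k) (single_pauli n k (S ! k))"
      by (rule nth_equalityI) (auto simp: T_def pauli_mult_def nth_single_pauli)
    then have T: "pauli_mat n (T (Suc k)) = pauli_mat n (T k) * pauli_mat n (single_pauli n k (S ! k))"
      by (simp add: pauli_mat_mult_disjoint T_def nth_single_pauli)
    have "V * pauli_mat n (single_pauli n k (S ! k)) = pauli_mat n (single_pauli n k (S ! k)) * V"
    proof (cases "S ! k = PI")
      case True
      then show ?thesis using V k by (simp add: pauli_mat_single_PI)
    next
      case False
      then have "k \<notin> gate_support n V" using S k disj by (auto simp: pauli_support_def is_pauli_def)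
      then show ?thesis by (rule commute_single_pauli_outside_support[OF V k])
    qed
    then show ?case using commute_mult[OF V] Suc T by simp
  qed
  moreover have "T n = S" using S by (intro nth_equalityI) (auto simp: T_def is_pauli_def)
  ultimately show ?thesis by auto
qed

section \<open>Projectors and execution of steps\<close>

definition sign_commute :: "complex mat \<Rightarrow> complex mat \<Rightarrow> bool \<Rightarrow> bool" where
  "sign_commute A W f \<longleftrightarrow> A * W = (if f then -1 else 1) \<cdot>\<^sub>m (W * A)"

lemma sign_commute_pauli_mat:
  assumes "is_pauli n S" "is_pauli n P"
  shows "sign_commute (pauli_mat n S) (pauli_mat n P) (pauli_comm P S)"
  using pauli_mat_commute[of S n P] assms
  by (simp add: sign_commute_def is_pauli_def pauli_comm_sym[of S P])

lemma sign_commute_smult: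
  assumes "sign_commute A W f" "A \<in> carrier_mat d d" "W \<in> carrier_mat d d"
  shows "sign_commute (k \<cdot>\<^sub>m A) W f"
  using assms by (auto simp: sign_commute_def mult.commute)

lemma commute_adjoint:
  assumes U: "unitary d V" and A: "A \<in> carrier_mat d d" and c: "V * A = A * V"
  shows "mat_adjoint V * A = A * mat_adjoint V"
proof -
  have V: "V \<in> carrier_mat d d" using U by (simp add: unitary_def)
  have "mat_adjoint V * A = mat_adjoint V * ((A * V) * mat_adjoint V)"
    using U A V by (simp add: unitary_def)
  also have "\<dots> = mat_adjoint V * ((V * A) * mat_adjoint V)" by (simp only: c)
  also have "\<dots> = A * mat_adjoint V"
    using U A V by (simp add: unitary_cancel)
  finally show ?thesis .
qed

lemma sign_commute_conj:
  assumes U: "unitary d V" and A: "A \<in> carrier_mat d d" and W: "W \<in> carrier_mat d d"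
    and c: "V * A = A * V" and sc: "sign_commute A W f"
  shows "sign_commute A (V * W * mat_adjoint V) f"
proof -
  have V: "V \<in> carrier_mat d d" using U by (simp add: unitary_def)
  have c': "mat_adjoint V * A = A * mat_adjoint V" by (rule commute_adjoint[OF U A c])
  have "A * (V * W * mat_adjoint V) = (A * V) * W * mat_adjoint V" using A V W by simp
  also have "\<dots> = (V * A) * W * mat_adjoint V" by (simp only: c)
  also have "\<dots> = V * (A * W) * mat_adjoint V" using A V W by simp
  also have "\<dots> = (if f then -1 else 1) \<cdot>\<^sub>m (V * W * (mat_adjoint V * A))"
    using A V W sc by (simp add: sign_commute_def c')
  also have "\<dots> = (if f then -1 else 1) \<cdot>\<^sub>m ((V * W * mat_adjoint V) * A)" using A V W by simp
  finally show ?thesis by (simp add: sign_commute_def)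
qed

lemma proj_mult_sign_commute:
  assumes A: "A \<in> carrier_mat (2^n) (2^n)" and W: "W \<in> carrier_mat (2^n) (2^n)"
    and "sign_commute A W f"
  shows "proj n A b * W = W * proj n A (b \<noteq> f)"
proof -
  have AW: "A * W = (if f then -1 else 1) \<cdot>\<^sub>m (W * A)" using assms(3) by (simp add: sign_commute_def)
  have "proj n A b * W = (1/2) \<cdot>\<^sub>m (W + (if b then -1 else 1) \<cdot>\<^sub>m (A * W))"
    using A W by (simp add: proj_def add_mult_distrib_mat[of _ "2^n" "2^n"])
  also have "\<dots> = W * proj n A (b \<noteq> f)"
    using A W by (cases b; cases f) (simp_all add: AW proj_def mult_add_distrib_mat[OF W one_carrier_mat])
  finally show ?thesis .
qed

fun is_mstep :: "step \<Rightarrow> bool" where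
  "is_mstep (MStep A) = True"
| "is_mstep (UStep V) = False"

fun step_mat :: "step \<Rightarrow> complex mat" where
  "step_mat (MStep A) = A"
| "step_mat (UStep V) = V"

lemma exec_append:
  "length os1 = length (filter is_mstep ss1) \<Longrightarrow>
   exec n (ss1 @ ss2) (os1 @ os2) \<rho> = exec n ss2 os2 (exec n ss1 os1 \<rho>)"
proof (induction ss1 arbitrary: os1 \<rho>)
  case (Cons st ss1)
  then show ?case by (cases st) (simp, cases os1, auto)
qed simp

lemma meas_mat_carrier [simp]: "meas_mat n s S \<in> carrier_mat (2^n) (2^n)"
  by (simp add: meas_mat_def)

lemma proj_carrier [simp]: "A \<in> carrier_mat (2^n) (2^n) \<Longrightarrow> proj n A b \<in> carrier_mat (2^n) (2^n)"
  and dim_proj [simp]: "A \<in> carrier_mat (2^n) (2^n) \<Longrightarrow> dim_row (proj n A b) = 2^n"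
    "A \<in> carrier_mat (2^n) (2^n) \<Longrightarrow> dim_col (proj n A b) = 2^n"
  by (simp_all add: proj_def)

lemma exec_carrier:
  "\<forall>st\<in>set ss. step_mat st \<in> carrier_mat (2^n) (2^n) \<Longrightarrow> \<rho> \<in> carrier_mat (2^n) (2^n) \<Longrightarrow>
   exec n ss os \<rho> \<in> carrier_mat (2^n) (2^n)"
proof (induction ss arbitrary: os \<rho>)
  case (Cons st ss)
  then show ?case
    by (cases st; cases os) (auto intro!: Cons.IH mult_carrier_mat)
qed simp

lemma xor_list_Cons [simp]: "xor_list (a # as) (b # bs) = (a \<noteq> b) # xor_list as bs"
  by (simp add: xor_list_def)

lemma xor_list_append:
  "length a = length c \<Longrightarrow> xor_list (a @ b) (c @ d) = xor_list a c @ xor_list b d"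
  by (simp add: xor_list_def)

section \<open>Propagating faults level by level\<close>

definition levels_upto :: "circuit \<Rightarrow> nat \<Rightarrow> circuit" where
  "levels_upto C L = concat (map (\<lambda>l. filter (\<lambda>x. fst x = l) C) [1..<Suc L])"

definition faulty_upto :: "nat \<Rightarrow> circuit \<Rightarrow> fault \<Rightarrow> nat \<Rightarrow> step list" where
  "faulty_upto n C F L = UStep (pauli_mat n (F 0)) #
     concat (map (\<lambda>l. map (op_step n \<circ> snd) (filter (\<lambda>x. fst x = l) C) @ [UStep (pauli_mat n (F l))])
                 [1..<Suc L])"

definition flips_upto :: "nat \<Rightarrow> circuit \<Rightarrow> fault \<Rightarrow> nat \<Rightarrow> bool list" where
  "flips_upto n C F L =
     map (\<lambda>(l, s, P). pauli_comm (cumulant n C F (l - 1)) P) (measurements (levels_upto C L))"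

lemma levels_upto_Suc:
  "levels_upto C (Suc L) = levels_upto C L @ filter (\<lambda>x. fst x = Suc L) C"
  by (simp add: levels_upto_def)

lemma faulty_upto_Suc:
  "faulty_upto n C F (Suc L) = faulty_upto n C F L @
     map (op_step n \<circ> snd) (filter (\<lambda>x. fst x = Suc L) C) @ [UStep (pauli_mat n (F (Suc L)))]"
  by (simp add: faulty_upto_def)

lemma measurements_append [simp]: "measurements (xs @ ys) = measurements xs @ measurements ys"
  by (simp add: measurements_def)

lemma measurements_Cons [simp]:
  "measurements ((l, Gate V) # seg) = measurements seg"
  "measurements ((l, Meas s S) # seg) = (l, s, S) # measurements seg"
  by (simp_all add: measurements_def)

lemma set_measurements: "set (measurements seg) = {(l, s, P). (l, Meas s P) \<in> set seg}"
  by (force simp: measurements_def split: operation.splits)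

lemma length_measurements: "length (filter is_mstep (map (op_step n \<circ> snd) seg)) = length (measurements seg)"
  by (induction seg) (auto simp: measurements_def op_step_def split: operation.splits)

lemma length_measurements_faulty_upto:
  "length (filter is_mstep (faulty_upto n C F L)) = length (measurements (levels_upto C L))"
proof (induction L)
  case 0
  then show ?case by (simp add: faulty_upto_def levels_upto_def measurements_def)
next
  case (Suc L)
  then show ?case
    using length_measurements[of n "filter (\<lambda>x. fst x = Suc L) C"]
    unfolding faulty_upto_Suc levels_upto_Suc by simp
qed

lemma filter_le_Suc_sorted:
  "sorted (map fst xs) \<Longrightarrow>
   filter (\<lambda>x. fst x \<le> Suc L) xs = filter (\<lambda>x. fst x \<le> L) xs @ filter (\<lambda>x. fst x = Suc L) xs"
proof (induction xs)
  case (Cons x xs)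
  then have "\<forall>y\<in>set xs. fst x \<le> fst y" by simp
  then have "fst x > L \<Longrightarrow> filter (\<lambda>x. fst x \<le> L) xs = [] \<and>
      filter (\<lambda>x. fst x \<le> Suc L) xs = filter (\<lambda>x. fst x = Suc L) xs"
    by (auto simp: filter_empty_conv intro!: filter_cong)
  then show ?case using Cons by auto
qed simp

lemma levels_upto_depth:
  assumes "clifford_circuit n C"
  shows "levels_upto C (depth C) = C"
proof -
  have sorted: "sorted (map fst C)" and pos: "\<forall>x\<in>set C. 1 \<le> fst x"
    using assms by (auto simp: clifford_circuit_def)
  have "levels_upto C L = filter (\<lambda>x. fst x \<le> L) C" for L
  proof (induction L)
    case 0
    have "filter (\<lambda>x. fst x \<le> 0) C = []" using pos by (auto simp: filter_empty_conv)
    then show ?case by (simp add: levels_upto_def)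
  next
    case (Suc L)
    then show ?case by (simp add: levels_upto_Suc filter_le_Suc_sorted[OF sorted])
  qed
  moreover have "fst x \<le> depth C" if "x \<in> set C" for x
    unfolding depth_def using that by (intro Max_ge) auto
  ultimately show ?thesis by simp
qed

lemma op_step_simps [simp]:
  "op_step n (Gate V) = UStep V" "op_step n (Meas s S) = MStep (meas_mat n s S)"
  by (simp_all add: op_step_def)

lemma step_mat_op_step_carrier:
  "op_ok n op \<Longrightarrow> step_mat (op_step n op) \<in> carrier_mat (2^n) (2^n)"
  by (cases op) (auto simp: op_step_def meas_mat_def clifford_gate_def unitary_def)

lemma step_mat_faulty_upto_carrier:
  "clifford_circuit n C \<Longrightarrow>
   \<forall>st\<in>set (faulty_upto n C F L). step_mat st \<in> carrier_mat (2^n) (2^n)"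
  by (auto simp: faulty_upto_def clifford_circuit_def intro!: step_mat_op_step_carrier)

fun conj_gates :: "circuit \<Rightarrow> complex mat \<Rightarrow> complex mat" where
  "conj_gates [] W = W"
| "conj_gates ((l, Gate V) # seg) W = conj_gates seg (V * W * mat_adjoint V)"
| "conj_gates ((l, Meas s S) # seg) W = conj_gates seg W"

fun apply_gate :: "complex mat \<Rightarrow> nat \<times> operation \<Rightarrow> complex mat" where
  "apply_gate A (l, Gate V) = V * A"
| "apply_gate A (l, Meas s P) = A"

lemma level_unitary_eq_foldl:
  "level_unitary n C l = foldl apply_gate (1\<^sub>m (2^n)) (filter (\<lambda>x. fst x = l) C)"
proof -
  have "foldl (\<lambda>A (k, op). case op of Gate V \<Rightarrow> if k = l then V * A else A | Meas s P \<Rightarrow> A) acc C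
      = foldl apply_gate acc (filter (\<lambda>x. fst x = l) C)" for acc
    by (induction C arbitrary: acc) (auto split: operation.splits)
  then show ?thesis by (simp add: level_unitary_def)
qed

lemma clifford_gate_foldl_apply_gate:
  "\<forall>x\<in>set seg. op_ok n (snd x) \<Longrightarrow> clifford_gate n A \<Longrightarrow> clifford_gate n (foldl apply_gate A seg)"
proof (induction seg arbitrary: A)
  case (Cons x seg)
  obtain l op where "x = (l, op)" by fastforce
  with Cons show ?case by (cases op) (auto simp: clifford_gate_mult)
qed simp

lemma conj_gates_eq_foldl:
  "\<forall>x\<in>set seg. op_ok n (snd x) \<Longrightarrow> A \<in> carrier_mat (2^n) (2^n) \<Longrightarrow> W \<in> carrier_mat (2^n) (2^n) \<Longrightarrow>
   conj_gates seg (A * W * mat_adjoint A) = foldl apply_gate A seg * W * mat_adjoint (foldl apply_gate A seg)"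
proof (induction seg arbitrary: A)
  case (Cons x seg)
  obtain l op where x: "x = (l, op)" by fastforce
  show ?case
  proof (cases op)
    case (Gate V)
    then have V: "V \<in> carrier_mat (2^n) (2^n)"
      using Cons.prems x by (simp add: clifford_gate_def unitary_def)
    have "V * (A * W * mat_adjoint A) * mat_adjoint V = (V * A) * W * mat_adjoint (V * A)"
      using V Cons.prems by (simp add: mat_adjoint_mult)
    then have "conj_gates (x # seg) (A * W * mat_adjoint A) = conj_gates seg ((V * A) * W * mat_adjoint (V * A))"
      by (simp only: x Gate conj_gates.simps)
    also have "\<dots> = foldl apply_gate (V * A) seg * W * mat_adjoint (foldl apply_gate (V * A) seg)"
      using Cons V x by (intro Cons.IH) auto
    finally show ?thesis by (simp add: x Gate)
  qed (use Cons x in simp)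
qed simp

lemma circuit_level_ops_ok:
  "clifford_circuit n C \<Longrightarrow> \<forall>x\<in>set (filter (\<lambda>x. fst x = l) C). op_ok n (snd x)"
  by (auto simp: clifford_circuit_def)

lemma clifford_level_unitary:
  "clifford_circuit n C \<Longrightarrow> clifford_gate n (level_unitary n C l)"
  unfolding level_unitary_eq_foldl
  by (intro clifford_gate_foldl_apply_gate circuit_level_ops_ok clifford_gate_one)

lemma conj_gates_level:
  assumes "clifford_circuit n C" "W \<in> carrier_mat (2^n) (2^n)"
  shows "conj_gates (filter (\<lambda>x. fst x = l) C) W =
    level_unitary n C l * W * mat_adjoint (level_unitary n C l)"
  using conj_gates_eq_foldl[OF circuit_level_ops_ok[OF assms(1)] one_carrier_mat assms(2)] assms(2)
  by (simp add: level_unitary_eq_foldl)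

lemma level_gate_commutes_measured_pauli:
  assumes circ: "clifford_circuit n C" and "(l, Gate V) \<in> set C" "(l, Meas s S) \<in> set C"
  shows "V * pauli_mat n S = pauli_mat n S * V"
proof (rule commute_pauli_if_disjoint_support)
  obtain i j where "i < length C" "C ! i = (l, Gate V)" "j < length C" "C ! j = (l, Meas s S)"
    using assms(2,3) by (metis in_set_conv_nth)
  then show "pauli_support S \<inter> gate_support n V = {}"
    using circ unfolding clifford_circuit_def by fastforce
  show "V \<in> carrier_mat (2^n) (2^n)" "is_pauli n S"
    using circ assms(2,3) by (auto simp: clifford_circuit_def clifford_gate_def unitary_def)
qed

lemma conj_unitary_sandwich:
  assumes U: "unitary d V" and "W \<in> carrier_mat d d" "X \<in> carrier_mat d d"
  shows "V * (W * X * W) * mat_adjoint V =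
    (V * W * mat_adjoint V) * (V * X * mat_adjoint V) * (V * W * mat_adjoint V)"
proof -
  have "V \<in> carrier_mat d d" using U by (simp add: unitary_def)
  then show ?thesis using assms by (simp add: unitary_cancel[OF U])
qed

lemma proj_sandwich_sign_commute:
  assumes A: "A \<in> carrier_mat (2^n) (2^n)" and W: "W \<in> carrier_mat (2^n) (2^n)"
    and X: "X \<in> carrier_mat (2^n) (2^n)" and sc: "sign_commute A W f"
  shows "proj n A b * (W * X * W) * proj n A b = W * (proj n A (b \<noteq> f) * X * proj n A (b \<noteq> f)) * W"
proof -
  have left: "proj n A b * W = W * proj n A (b \<noteq> f)"
    by (rule proj_mult_sign_commute[OF A W sc])
  have flip: "((b \<noteq> f) \<noteq> f) = b" by auto
  have "proj n A (b \<noteq> f) * W = W * proj n A b"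
    using proj_mult_sign_commute[OF A W sc, of "b \<noteq> f"] by (simp only: flip)
  then have "proj n A b * (W * X * W) * proj n A b = (proj n A b * W) * X * (proj n A (b \<noteq> f) * W)"
    using A W X by simp
  also have "\<dots> = W * (proj n A (b \<noteq> f) * X * proj n A (b \<noteq> f)) * W"
    using A W X by (simp add: left)
  finally show ?thesis .
qed

lemma exec_level_conj:
  assumes "\<forall>x\<in>set seg. op_ok n (snd x)"
    and "\<And>k k' V s S. (k, Gate V) \<in> set seg \<Longrightarrow> (k', Meas s S) \<in> set seg \<Longrightarrow>
           V * pauli_mat n S = pauli_mat n S * V"
    and "\<And>k s S. (k, Meas s S) \<in> set seg \<Longrightarrow> sign_commute (pauli_mat n S) W (fl S)"
    and "hermitian W" "W \<in> carrier_mat (2^n) (2^n)" "X \<in> carrier_mat (2^n) (2^n)"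
    and "length os = length (measurements seg)"
  shows "exec n (map (op_step n \<circ> snd) seg) os (W * X * W) =
    conj_gates seg W *
    exec n (map (op_step n \<circ> snd) seg) (xor_list os (map (\<lambda>(l, s, S). fl S) (measurements seg))) X *
    conj_gates seg W"
  using assms
proof (induction seg arbitrary: W X os)
  case Nil
  then show ?case by (simp add: measurements_def xor_list_def)
next
  case (Cons x seg)
  note ok = Cons.prems(1) and commute = Cons.prems(2) and flips = Cons.prems(3)
    and herm = Cons.prems(4) and W = Cons.prems(5) and X = Cons.prems(6)
  obtain l op where x: "x = (l, op)" by fastforce
  show ?case
  proof (cases op)
    case (Gate V)
    have U: "unitary (2^n) V" using ok x Gate by (simp add: clifford_gate_def)
    then have V: "V \<in> carrier_mat (2^n) (2^n)" by (simp add: unitary_def)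
    define W' where "W' = V * W * mat_adjoint V"
    have W': "W' \<in> carrier_mat (2^n) (2^n)" "hermitian W'"
      unfolding W'_def using V W hermitian_conj[OF herm W V] by simp_all
    have flips': "sign_commute (pauli_mat n S) W' (fl S)" if "(k, Meas s S) \<in> set seg" for k s S
    proof -
      have "V * pauli_mat n S = pauli_mat n S * V" using commute[of l V k s S] that x Gate by simp
      then show ?thesis
        unfolding W'_def using that flips by (intro sign_commute_conj[OF U pauli_mat_carrier W]) auto
    qed
    have "exec n (map (op_step n \<circ> snd) (x # seg)) os (W * X * W) =
        exec n (map (op_step n \<circ> snd) seg) os (W' * (V * X * mat_adjoint V) * W')"
      unfolding W'_def by (simp del: assoc_mult_mat_dims add: x Gate conj_unitary_sandwich[OF U W X])
    also have "\<dots> = conj_gates seg W' *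
        exec n (map (op_step n \<circ> snd) seg) (xor_list os (map (\<lambda>(l, s, S). fl S) (measurements seg)))
          (V * X * mat_adjoint V) * conj_gates seg W'"
      using Cons.prems x Gate V W' X flips' by (intro Cons.IH) (auto intro: commute)
    finally show ?thesis by (simp add: x Gate W'_def comp_def)
  next
    case (Meas s S)
    obtain b os' where os: "os = b # os'" and os': "length os' = length (measurements seg)"
      using Cons.prems(7) x Meas by (cases os) auto
    let ?A = "meas_mat n s S"
    let ?b' = "b \<noteq> fl S"
    have "sign_commute (pauli_mat n S) W (fl S)" using flips x Meas by auto
    then have sc: "sign_commute ?A W (fl S)"
      unfolding meas_mat_def using W by (intro sign_commute_smult) auto
    have "exec n (map (op_step n \<circ> snd) (x # seg)) os (W * X * W) =
        exec n (map (op_step n \<circ> snd) seg) os' (W * (proj n ?A ?b' * X * proj n ?A ?b') * W)"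
      by (simp del: assoc_mult_mat_dims add: x Meas os proj_sandwich_sign_commute[OF _ W X sc])
    also have "\<dots> = conj_gates seg W *
        exec n (map (op_step n \<circ> snd) seg) (xor_list os' (map (\<lambda>(l, s, S). fl S) (measurements seg)))
          (proj n ?A ?b' * X * proj n ?A ?b') * conj_gates seg W"
      using Cons.prems x Meas os' W X by (intro Cons.IH) (auto intro: commute flips)
    finally show ?thesis by (simp add: x Meas os comp_def)
  qed
qed

lemma pauli_mat_no_fault [simp]: "pauli_mat n (no_fault n l) = 1\<^sub>m (2^n)"
  by (simp add: no_fault_def pauli_mat_identity)

lemma cumulant_is_pauli:
  assumes circ: "clifford_circuit n C" and flt: "is_fault n C F"
  shows "L \<le> depth C \<Longrightarrow> is_pauli n (cumulant n C F L)"
proof (induction L)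
  case 0
  then show ?case using flt by (simp add: is_fault_def)
next
  case (Suc L)
  then have "is_pauli n (clifford_conj n (level_unitary n C (Suc L)) (cumulant n C F L))"
    by (simp add: clifford_conjD(1) clifford_level_unitary[OF circ])
  moreover have "is_pauli n (F (Suc L))" using flt Suc.prems by (simp add: is_fault_def)
  ultimately show ?case by (simp add: is_pauli_def pauli_mult_def)
qed

text \<open>Both sides are conjugations by unitaries that agree with the Pauli matrix of
  pauli_mult Q (clifford_conj n G P) up to a phase, and phases cancel in a conjugation.\<close>
lemma conj_pauli_after_clifford:
  assumes G: "clifford_gate n G" and P: "is_pauli n P" and Q: "is_pauli n Q"
    and Z: "dim_row Z = 2^n" "dim_col Z = 2^n"
  defines "H \<equiv> G * pauli_mat n P * mat_adjoint G"
  shows "pauli_mat n Q * (H * Z * H) * pauli_mat n Q =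
    pauli_mat n (pauli_mult Q (clifford_conj n G P)) * Z * pauli_mat n (pauli_mult Q (clifford_conj n G P))"
proof -
  let ?R = "pauli_mult Q (clifford_conj n G P)"
  have GU: "unitary (2^n) G" using G by (simp add: clifford_gate_def)
  then have Gc: "G \<in> carrier_mat (2^n) (2^n)" by (simp add: unitary_def)
  obtain c where c: "H = c \<cdot>\<^sub>m pauli_mat n (clifford_conj n G P)"
    using clifford_conjD(2)[OF G P] unfolding H_def by blast
  define k where "k = c * (\<Prod>q<n. pauli1_phase (Q ! q) (clifford_conj n G P ! q))"
  have QH: "pauli_mat n Q * H = k \<cdot>\<^sub>m pauli_mat n ?R"
    using pauli_mat_mult[of Q n "clifford_conj n G P"] clifford_conjD(1)[OF G P] Q
    by (simp add: c k_def is_pauli_def)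
  have "unitary (2^n) (pauli_mat n Q * H)"
    unfolding H_def by (intro unitary_mult unitary_pauli_mat unitary_adjoint GU)
  then have k: "k * cnj k = 1"
    unfolding QH by (rule unit_modulus_if_unitary_smult_pauli)
  have "hermitian H"
    unfolding H_def by (rule hermitian_conj[OF _ pauli_mat_carrier Gc]) (simp add: hermitian_def)
  then have "mat_adjoint (pauli_mat n Q * H) = H * pauli_mat n Q"
    using Gc by (simp add: H_def hermitian_def mat_adjoint_mult)
  moreover have "pauli_mat n Q * (H * Z * H) * pauli_mat n Q = (pauli_mat n Q * H) * Z * (H * pauli_mat n Q)"
    using Gc Z by (simp add: H_def)
  ultimately have "pauli_mat n Q * (H * Z * H) * pauli_mat n Q =
      (k \<cdot>\<^sub>m pauli_mat n ?R) * Z * mat_adjoint (k \<cdot>\<^sub>m pauli_mat n ?R)"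
    by (simp only: QH)
  also have "\<dots> = pauli_mat n ?R * Z * pauli_mat n ?R"
    by (rule conj_unit_smult_pauli[OF k Z])
  finally show ?thesis .
qed

lemma exec_faulty_upto_Suc:
  assumes "length os1 = length (measurements (levels_upto C L))"
    and "length os2 = length (measurements (filter (\<lambda>x. fst x = Suc L) C))"
  shows "exec n (faulty_upto n C F (Suc L)) (os1 @ os2) X =
    pauli_mat n (F (Suc L)) *
    exec n (map (op_step n \<circ> snd) (filter (\<lambda>x. fst x = Suc L) C)) os2 (exec n (faulty_upto n C F L) os1 X) *
    pauli_mat n (F (Suc L))"
proof -
  have "exec n (faulty_upto n C F (Suc L)) (os1 @ os2 @ []) X =
    exec n [UStep (pauli_mat n (F (Suc L)))] []
      (exec n (map (op_step n \<circ> snd) (filter (\<lambda>x. fst x = Suc L) C)) os2 (exec n (faulty_upto n C F L) os1 X))"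
    unfolding faulty_upto_Suc using assms
    by (simp only: exec_append length_measurements_faulty_upto length_measurements)
  then show ?thesis by simp
qed

lemma flips_upto_Suc:
  "flips_upto n C F (Suc L) = flips_upto n C F L @
     map (\<lambda>(l, s, S). pauli_comm (cumulant n C F L) S) (measurements (filter (\<lambda>x. fst x = Suc L) C))"
  by (auto simp: flips_upto_def levels_upto_Suc set_measurements intro!: map_cong)

lemma exec_fault_free_upto_Suc:
  assumes circ: "clifford_circuit n C" and X: "X \<in> carrier_mat (2^n) (2^n)"
    and os1: "length os1 = length (measurements (levels_upto C L))"
    and os2: "length os2 = length (measurements (filter (\<lambda>x. fst x = Suc L) C))"
  shows "exec n (faulty_upto n C (no_fault n) (Suc L)) (xor_list (os1 @ os2) (flips_upto n C F (Suc L))) X =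
    exec n (map (op_step n \<circ> snd) (filter (\<lambda>x. fst x = Suc L) C))
      (xor_list os2 (map (\<lambda>(l, s, S). pauli_comm (cumulant n C F L) S) (measurements (filter (\<lambda>x. fst x = Suc L) C))))
      (exec n (faulty_upto n C (no_fault n) L) (xor_list os1 (flips_upto n C F L)) X)"
proof -
  let ?seg = "filter (\<lambda>x. fst x = Suc L) C"
  let ?g = "map (\<lambda>(l, s, S). pauli_comm (cumulant n C F L) S) (measurements ?seg)"
  have Y: "exec n (map (op_step n \<circ> snd) ?seg) (xor_list os2 ?g)
      (exec n (faulty_upto n C (no_fault n) L) (xor_list os1 (flips_upto n C F L)) X) \<in> carrier_mat (2^n) (2^n)"
    using circuit_level_ops_ok[OF circ]
    by (intro exec_carrier[OF _ exec_carrier[OF step_mat_faulty_upto_carrier[OF circ] X]])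
       (auto intro: step_mat_op_step_carrier)
  have "xor_list (os1 @ os2) (flips_upto n C F (Suc L)) = xor_list os1 (flips_upto n C F L) @ xor_list os2 ?g"
    unfolding flips_upto_Suc using os1 by (intro xor_list_append) (simp add: flips_upto_def)
  moreover have "length (xor_list os1 (flips_upto n C F L)) = length (measurements (levels_upto C L))"
    "length (xor_list os2 ?g) = length (measurements ?seg)"
    using os1 os2 by (simp_all add: xor_list_def flips_upto_def)
  ultimately show ?thesis
    using Y by (simp add: exec_faulty_upto_Suc)
qed

lemma exec_circuit_level_conj:
  assumes circ: "clifford_circuit n C" and P: "is_pauli n P" and Y: "Y \<in> carrier_mat (2^n) (2^n)"
    and os: "length os = length (measurements (filter (\<lambda>x. fst x = l) C))"
  defines "H \<equiv> level_unitary n C l * pauli_mat n P * mat_adjoint (level_unitary n C l)"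
  shows "exec n (map (op_step n \<circ> snd) (filter (\<lambda>x. fst x = l) C)) os (pauli_mat n P * Y * pauli_mat n P) =
    H * exec n (map (op_step n \<circ> snd) (filter (\<lambda>x. fst x = l) C))
          (xor_list os (map (\<lambda>(k, s, S). pauli_comm P S) (measurements (filter (\<lambda>x. fst x = l) C)))) Y * H"
  unfolding H_def conj_gates_level[OF circ pauli_mat_carrier, symmetric]
proof (rule exec_level_conj[OF circuit_level_ops_ok[OF circ] _ _ _ _ Y os])
  show "V * pauli_mat n S = pauli_mat n S * V"
    if "(k, Gate V) \<in> set (filter (\<lambda>x. fst x = l) C)" "(k', Meas s S) \<in> set (filter (\<lambda>x. fst x = l) C)"
    for k k' V s S
    using that by (intro level_gate_commutes_measured_pauli[OF circ]) auto
  show "sign_commute (pauli_mat n S) (pauli_mat n P) (pauli_comm P S)"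
    if "(k, Meas s S) \<in> set (filter (\<lambda>x. fst x = l) C)" for k s S
    using that circ P by (intro sign_commute_pauli_mat) (auto simp: clifford_circuit_def)
qed (simp_all add: hermitian_def)

lemma exec_faulty_upto:
  assumes circ: "clifford_circuit n C" and flt: "is_fault n C F" and X: "X \<in> carrier_mat (2^n) (2^n)"
  shows "L \<le> depth C \<Longrightarrow> length os = length (measurements (levels_upto C L)) \<Longrightarrow>
    exec n (faulty_upto n C F L) os X =
    pauli_mat n (cumulant n C F L) *
    exec n (faulty_upto n C (no_fault n) L) (xor_list os (flips_upto n C F L)) X *
    pauli_mat n (cumulant n C F L)"
proof (induction L arbitrary: os)
  case 0
  then show ?case using X by (simp add: faulty_upto_def levels_upto_def measurements_def xor_list_def)
next
  case (Suc L)
  let ?seg = "filter (\<lambda>x. fst x = Suc L) C"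
  let ?P = "cumulant n C F L"
  let ?G = "level_unitary n C (Suc L)"
  let ?H = "?G * pauli_mat n ?P * mat_adjoint ?G"
  let ?g = "map (\<lambda>(l, s, S). pauli_comm ?P S) (measurements ?seg)"
  define os1 where "os1 = take (length (measurements (levels_upto C L))) os"
  define os2 where "os2 = drop (length (measurements (levels_upto C L))) os"
  have os: "os = os1 @ os2" and os1: "length os1 = length (measurements (levels_upto C L))"
    and os2: "length os2 = length (measurements ?seg)"
    using Suc.prems(2) by (simp_all add: os1_def os2_def levels_upto_Suc)
  define Y1 where "Y1 = exec n (faulty_upto n C (no_fault n) L) (xor_list os1 (flips_upto n C F L)) X"
  have Y1: "Y1 \<in> carrier_mat (2^n) (2^n)"
    unfolding Y1_def by (rule exec_carrier[OF step_mat_faulty_upto_carrier[OF circ] X])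
  define Y2 where "Y2 = exec n (map (op_step n \<circ> snd) ?seg) (xor_list os2 ?g) Y1"
  have Y2: "Y2 \<in> carrier_mat (2^n) (2^n)"
    unfolding Y2_def using circuit_level_ops_ok[OF circ]
    by (intro exec_carrier[OF _ Y1]) (auto intro: step_mat_op_step_carrier)
  have P: "is_pauli n ?P" using Suc.prems(1) by (intro cumulant_is_pauli[OF circ flt]) simp
  have "exec n (faulty_upto n C F (Suc L)) os X =
      pauli_mat n (F (Suc L)) *
      exec n (map (op_step n \<circ> snd) ?seg) os2 (pauli_mat n ?P * Y1 * pauli_mat n ?P) *
      pauli_mat n (F (Suc L))"
    using Suc.IH[OF _ os1] Suc.prems(1) by (simp add: os exec_faulty_upto_Suc[OF os1 os2] Y1_def)
  also have "exec n (map (op_step n \<circ> snd) ?seg) os2 (pauli_mat n ?P * Y1 * pauli_mat n ?P) = ?H * Y2 * ?H"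
    unfolding Y2_def by (rule exec_circuit_level_conj[OF circ P Y1 os2])
  also have "pauli_mat n (F (Suc L)) * (?H * Y2 * ?H) * pauli_mat n (F (Suc L)) =
      pauli_mat n (cumulant n C F (Suc L)) * Y2 * pauli_mat n (cumulant n C F (Suc L))"
    using flt Suc.prems(1) carrier_matD[OF Y2] unfolding cumulant.simps(2)
    by (intro conj_pauli_after_clifford[OF clifford_level_unitary[OF circ] P]) (auto simp: is_fault_def)
  also have "Y2 = exec n (faulty_upto n C (no_fault n) (Suc L)) (xor_list os (flips_upto n C F (Suc L))) X"
    by (simp add: os exec_fault_free_upto_Suc[OF circ X os1 os2] Y2_def Y1_def)
  finally show ?case .
qed

lemma mat_trace_mult_comm:
  assumes "A \<in> carrier_mat d d" "B \<in> carrier_mat d d"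
  shows "mat_trace (A * B) = mat_trace (B * (A :: complex mat))"
proof -
  have "mat_trace (A * B) = (\<Sum>i<d. \<Sum>k<d. A $$ (i,k) * B $$ (k,i))"
    using assms by (simp add: mat_trace_def scalar_prod_def lessThan_atLeast0)
  also have "\<dots> = (\<Sum>k<d. \<Sum>i<d. B $$ (k,i) * A $$ (i,k))"
    by (subst sum.swap) (simp add: mult.commute)
  also have "\<dots> = mat_trace (B * A)"
    using assms by (simp add: mat_trace_def scalar_prod_def lessThan_atLeast0)
  finally show ?thesis .
qed

lemma mat_trace_pauli_conj:
  assumes "Y \<in> carrier_mat (2^n) (2^n)"
  shows "mat_trace (pauli_mat n P * Y * pauli_mat n P) = mat_trace Y"
proof -
  have "mat_trace (pauli_mat n P * Y * pauli_mat n P) = mat_trace (pauli_mat n P * (Y * pauli_mat n P))"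
    using assms by simp
  also have "\<dots> = mat_trace (Y * pauli_mat n P * pauli_mat n P)"
    using assms by (subst mat_trace_mult_comm[of _ "2^n"]) auto
  finally show ?thesis using assms by (simp add: pauli_mat_square)
qed

lemma faulty_steps_eq_faulty_upto: "faulty_steps n C F = faulty_upto n C F (depth C)"
  by (simp add: faulty_steps_def faulty_upto_def)

lemma exec_faulty_steps:
  assumes circ: "clifford_circuit n C" and "is_fault n C F" "\<rho> \<in> carrier_mat (2^n) (2^n)"
    and "length os = num_meas C"
  shows "exec n (faulty_steps n C F) os \<rho> =
    pauli_mat n (cumulant n C F (depth C)) *
    exec n (faulty_steps n C (no_fault n)) (xor_list os (flip_vector n C F)) \<rho> *
    pauli_mat n (cumulant n C F (depth C))"
proof -
  have "flip_vector n C F = flips_upto n C F (depth C)"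
    by (simp add: flip_vector_def flips_upto_def levels_upto_depth[OF circ])
  then show ?thesis
    using exec_faulty_upto[OF assms(1-3)] assms(4)
    by (simp add: faulty_steps_eq_faulty_upto num_meas_def levels_upto_depth[OF circ])
qed

lemma conj_hermitian_phase_pauli:
  assumes "hermitian (c \<cdot>\<^sub>m pauli_mat n P)" "c * cnj c = 1" "dim_row Z = 2^n" "dim_col Z = 2^n"
  shows "(c \<cdot>\<^sub>m pauli_mat n P) * Z * (c \<cdot>\<^sub>m pauli_mat n P) = pauli_mat n P * Z * pauli_mat n P"
  using conj_unit_smult_pauli[OF assms(2-4), of P] assms(1) unfolding hermitian_def by simp

theorem mainTheorem5:
  fixes n :: nat and C :: circuit and \<rho> :: "complex mat" and F :: fault
    and E :: "complex mat" and c :: complex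
  assumes "clifford_circuit n C"
    and "density_mat n \<rho>"
    and "is_fault n C F"
    and "c \<in> {1, -1, \<i>, -\<i>}"
    and "E = c \<cdot>\<^sub>m pauli_mat n (cumulant n C F (depth C))"
    and "hermitian E"
  shows "\<forall>os. length os = num_meas C \<longrightarrow>
           prob_F n C F \<rho> os = prob n C \<rho> (xor_list os (flip_vector n C F)) \<and>
           (prob_F n C F \<rho> os \<noteq> 0 \<longrightarrow>
              state_F n C F \<rho> os = E * state n C \<rho> (xor_list os (flip_vector n C F)) * E)"
proof (intro allI impI)
  fix os :: "bool list"
  assume len: "length os = num_meas C"
  let ?os' = "xor_list os (flip_vector n C F)"
  let ?P = "pauli_mat n (cumulant n C F (depth C))"
  let ?Y = "exec n (faulty_steps n C (no_fault n)) ?os' \<rho>"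
  have \<rho>: "\<rho> \<in> carrier_mat (2^n) (2^n)" using assms(2) by (simp add: density_mat_def)
  have Y: "?Y \<in> carrier_mat (2^n) (2^n)"
    unfolding faulty_steps_eq_faulty_upto by (rule exec_carrier[OF step_mat_faulty_upto_carrier[OF assms(1)] \<rho>])
  have run: "exec n (faulty_steps n C F) os \<rho> = ?P * ?Y * ?P"
    by (rule exec_faulty_steps[OF assms(1,3) \<rho> len])
  have EYE: "E * ?Y * E = ?P * ?Y * ?P"
    unfolding assms(5) using assms(4,6) Y by (intro conj_hermitian_phase_pauli) (auto simp: assms(5))
  have prob: "prob_F n C F \<rho> os = prob n C \<rho> ?os'"
    by (simp add: prob_F_def prob_def run mat_trace_pauli_conj[OF Y])
  have "state_F n C F \<rho> os = complex_of_real (1 / prob n C \<rho> ?os') \<cdot>\<^sub>m (E * ?Y * E)"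
    unfolding state_F_def prob run EYE ..
  also have "\<dots> = E * state n C \<rho> ?os' * E"
    using Y by (simp add: state_def state_F_def prob_def assms(5))
  finally show "prob_F n C F \<rho> os = prob n C \<rho> ?os' \<and>
      (prob_F n C F \<rho> os \<noteq> 0 \<longrightarrow> state_F n C F \<rho> os = E * state n C \<rho> ?os' * E)"
    using prob by simp
qed

end
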